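(* Let $\mathcal{T}$ be an $l$-eligible microdata table and let $\dot{R}$ be the set of removed tuples at the end of Phase One (as described in the context). Then $OPT \ge l\cdot h(\dot{R})$.
   Context: A microdata table $\mathcal{T}$ is a multiset of $n$ tuples, each with values on $d$ quasi-identifier (QI) attributes and one sensitive attribute (SA). For a multiset $Q$ of tuples and SA value $v$, $h(Q,v)$ is the number of tuples of $Q$ with SA value $v$, $h(Q)=\max_v h(Q,v)$, and the pillars of $Q$ are the SA values $v$ with $h(Q,v)=h(Q)$. $Q$ is $l$-eligible if $|Q|\ge l\cdot h(Q)$. Partition $\mathcal{T}$ into $Q_1,\dots,Q_s$, the maximal classes of tuples having identical values on all QI attributes. Reformulated tuple minimization: choose sub-multisets $Q'_i\subseteq Q_i$ and let $R'=\mathcal{T}\setminus\bigcup_i Q'_i$, such that every $Q'_i$ and $R'$ are $l$-eligible, minimizing $|R'|$; $OPT$ denotes the minimum value. Phase One: start with $R=\emptyset$; for each $i$, while $Q_i$ is not $l$-eligible, move one tuple whose SA value is a pillar of $Q_i$ from $Q_i$ to $R$ (ties arbitrary). $\dot{R}$ denotes the resulting $R$. *)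

theory Defs
  imports "HOL-Library.Multiset"
begin

text \<open>A tuple is a pair (QI-vector, SA value); a microdata table is a multiset of tuples.
  The QI part is abstracted as a single value of type 'q (the vector of all d QI values).\<close>

definition hv :: "('q \<times> 's) multiset \<Rightarrow> 's \<Rightarrow> nat" where
  "hv Q v = count (image_mset snd Q) v"

definition h :: "('q \<times> 's) multiset \<Rightarrow> nat" where
  "h Q = Max (insert 0 ((\<lambda>v. hv Q v) ` set_mset (image_mset snd Q)))"

definition pillar :: "('q \<times> 's) multiset \<Rightarrow> 's \<Rightarrow> bool" where
  "pillar Q v \<longleftrightarrow> hv Q v = h Q"

definition eligible :: "nat \<Rightarrow> ('q \<times> 's) multiset \<Rightarrow> bool" where
  "eligible l Q \<longleftrightarrow> l * h Q \<le> size Q"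

definition qis :: "('q \<times> 's) multiset \<Rightarrow> 'q set" where
  "qis T = fst ` set_mset T"

definition qclass :: "('q \<times> 's) multiset \<Rightarrow> 'q \<Rightarrow> ('q \<times> 's) multiset" where
  "qclass T q = filter_mset (\<lambda>t. fst t = q) T"

text \<open>Phase One on a single class: \<open>class_run l Q Qf Rf\<close> means that starting from Q, repeatedly
  moving a tuple whose SA value is a pillar while Q is not l-eligible, one can end with the
  class Qf and the moved tuples Rf (ties are resolved arbitrarily, so this is a relation).\<close>
inductive class_run :: "nat \<Rightarrow> ('q \<times> 's) multiset \<Rightarrow> ('q \<times> 's) multiset \<Rightarrow> ('q \<times> 's) multiset \<Rightarrow> bool"
  for l where
  stop: "eligible l Q \<Longrightarrow> class_run l Q Q {#}"
| move: "\<lbrakk>\<not> eligible l Q; t \<in># Q; pillar Q (snd t); class_run l (Q - {#t#}) Qf Rf\<rbrakk>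
          \<Longrightarrow> class_run l Q Qf (Rf + {#t#})"

text \<open>\<open>phase_one l T R\<close>: R is a possible value of \<open>\<dot>R\<close> at the end of Phase One.\<close>
definition phase_one :: "nat \<Rightarrow> ('q \<times> 's) multiset \<Rightarrow> ('q \<times> 's) multiset \<Rightarrow> bool" where
  "phase_one l T R \<longleftrightarrow> (\<exists>Rs. (\<forall>q\<in>qis T. \<exists>Qf. class_run l (qclass T q) Qf (Rs q))
                              \<and> R = (\<Sum>q\<in>qis T. Rs q))"

definition feasible :: "nat \<Rightarrow> ('q \<times> 's) multiset \<Rightarrow> ('q \<Rightarrow> ('q \<times> 's) multiset) \<Rightarrow> bool" where
  "feasible l T Qs \<longleftrightarrow> (\<forall>q\<in>qis T. Qs q \<subseteq># qclass T q \<and> eligible l (Qs q))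
                       \<and> eligible l (T - (\<Sum>q\<in>qis T. Qs q))"

definition opt :: "nat \<Rightarrow> ('q \<times> 's) multiset \<Rightarrow> nat" where
  "opt l T = Inf {size (T - (\<Sum>q\<in>qis T. Qs q)) | Qs. feasible l T Qs}"

end

theory Submission
  imports Defs
begin

text \<open>Phase One removes, inside each class, only as many tuples of each SA value as every
  l-eligible sub-multiset of the class must also leave out: while a class is not l-eligible,
  each of its pillars occurs in it more often than in any l-eligible sub-multiset. Hence the
  SA histogram of \<open>\<dot>R\<close> is dominated by that of the remainder R' of any feasible solution, so
  \<open>l \<cdot> h(\<dot>R) \<le> l \<cdot> h(R') \<le> |R'|\<close>.\<close>

abbreviation sa_hist :: "('q \<times> 's) multiset \<Rightarrow> 's multiset" where
  "sa_hist Q \<equiv> image_mset snd Q"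

lemma hv_le_h: "hv Q v \<le> h Q"
proof (cases "v \<in># sa_hist Q")
  case True
  then show ?thesis unfolding h_def by (intro Max_ge) auto
next
  case False
  then have "hv Q v = 0"
    by (simp add: hv_def count_eq_zero_iff)
  then show ?thesis by simp
qed

lemma h_mono:
  assumes "sa_hist Q' \<subseteq># sa_hist Q"
  shows "h Q' \<le> h Q"
proof -
  have "hv Q' v \<le> hv Q v" for v
    using assms by (simp add: hv_def subseteq_mset_def)
  then show ?thesis unfolding h_def[of Q']
    by (intro Max.boundedI) (auto intro: order_trans[OF _ hv_le_h])
qed

lemma eligible_size_ge_h:
  assumes "eligible l R'" and "sa_hist R \<subseteq># sa_hist R'"
  shows "l * h R \<le> size R'"
  using assms h_mono[OF assms(2)] unfolding eligible_def
  by (meson le_trans mult_le_mono2)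

lemma sum_subseteq_mset_mono:
  "(\<And>a. a \<in> A \<Longrightarrow> M a \<subseteq># N a) \<Longrightarrow> (\<Sum>a\<in>A. M a) \<subseteq># (\<Sum>a\<in>A. N a)"
  by (induction A rule: infinite_finite_induct) (auto intro: subset_mset.add_mono)

lemma sum_filter_mset_fibres:
  assumes "finite A" and "f ` set_mset M \<subseteq> A"
  shows "(\<Sum>a\<in>A. filter_mset (\<lambda>x. f x = a) M) = M"
proof (rule multiset_eqI)
  fix x
  have "(\<Sum>a\<in>A. count (filter_mset (\<lambda>x. f x = a) M) x)
        = (\<Sum>a\<in>A. if a = f x then count M x else 0)"
    by (intro sum.cong) auto
  also have "\<dots> = count M x"
    using assms by (auto simp: count_eq_zero_iff)
  finally show "count (\<Sum>a\<in>A. filter_mset (\<lambda>x. f x = a) M) x = count M x"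
    by (simp add: count_sum)
qed

lemma sum_qclass: "(\<Sum>q\<in>qis T. qclass T q) = T"
  unfolding qclass_def qis_def by (rule sum_filter_mset_fibres) auto

lemma class_run_decomp: "class_run l Q Qf Rf \<Longrightarrow> Q = Qf + Rf"
  by (induction rule: class_run.induct) (simp_all, metis insert_DiffM)

text \<open>The histogram (rather than the multiset) of Q' has to be compared: the tuple moved by
  Phase One may itself lie in Q' while another tuple with the same SA value does not.\<close>

lemma class_run_dominates_eligible:
  "class_run l Q Qf Rf \<Longrightarrow> sa_hist Q' \<subseteq># sa_hist Q \<Longrightarrow> eligible l Q'
   \<Longrightarrow> sa_hist Q' \<subseteq># sa_hist Qf"
proof (induction arbitrary: Q' rule: class_run.induct)
  case (stop Q)
  then show ?case by simp
next
  case (move Q t Qf Rf)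
  let ?v = "snd t"
  have "hv Q' ?v < hv Q ?v"
  proof (rule ccontr)
    assume "\<not> hv Q' ?v < hv Q ?v"
    then have "h Q \<le> h Q'"
      using move.hyps(3) hv_le_h[of Q' ?v] by (simp add: pillar_def)
    moreover have "size Q' \<le> size Q"
      using size_mset_mono[OF move.prems(1)] by simp
    ultimately show False
      using move.hyps(1) move.prems(2) unfolding eligible_def
      by (meson le_trans mult_le_mono2 not_le)
  qed
  then have "add_mset ?v (sa_hist Q') \<subseteq># sa_hist Q"
    using move.prems(1) by (auto simp: subseteq_mset_def hv_def)
  then have "sa_hist Q' \<subseteq># sa_hist (Q - {#t#})"
    using move.hyps(2) by (simp add: insert_subset_eq_iff image_mset_Diff)
  then show ?case
    using move.IH move.prems(2) by blast
qed

lemma class_run_removed_plus_eligible: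
  assumes "class_run l Q Qf Rf" and "Q' \<subseteq># Q" and "eligible l Q'"
  shows "sa_hist (Rf + Q') \<subseteq># sa_hist Q"
proof -
  have "sa_hist Q' \<subseteq># sa_hist Qf"
    using class_run_dominates_eligible[OF assms(1) image_mset_subseteq_mono[OF assms(2)] assms(3)] .
  then show ?thesis
    using class_run_decomp[OF assms(1)] by (simp add: add.commute subset_mset.add_left_mono)
qed

lemma phase_one_removed_dominated:
  assumes "phase_one l T R" and "feasible l T Qs"
  shows "sa_hist R \<subseteq># sa_hist (T - (\<Sum>q\<in>qis T. Qs q))"
proof -
  obtain Rs where runs: "\<forall>q\<in>qis T. \<exists>Qf. class_run l (qclass T q) Qf (Rs q)"
    and R: "R = (\<Sum>q\<in>qis T. Rs q)"
    using assms(1) unfolding phase_one_def by blast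
  have sub: "Qs q \<subseteq># qclass T q" and el: "eligible l (Qs q)" if "q \<in> qis T" for q
    using assms(2) that unfolding feasible_def by auto
  have per_class: "sa_hist (Rs q + Qs q) \<subseteq># sa_hist (qclass T q)" if "q \<in> qis T" for q
    using runs that class_run_removed_plus_eligible[OF _ sub el] by blast
  have hist_sum: "sa_hist (\<Sum>q\<in>A. M q) = (\<Sum>q\<in>A. sa_hist (M q))" for A and M :: "'q \<Rightarrow> _"
    using sum_comp_morphism[of "image_mset snd" M A] by (simp add: comp_def)
  have "sa_hist R + sa_hist (\<Sum>q\<in>qis T. Qs q) = (\<Sum>q\<in>qis T. sa_hist (Rs q + Qs q))"
    unfolding R hist_sum by (simp add: sum.distrib)
  also have "\<dots> \<subseteq># (\<Sum>q\<in>qis T. sa_hist (qclass T q))"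
    by (rule sum_subseteq_mset_mono) (rule per_class)
  also have "\<dots> = sa_hist T"
    unfolding hist_sum[symmetric] sum_qclass ..
  finally have le: "sa_hist R + sa_hist (\<Sum>q\<in>qis T. Qs q) \<subseteq># sa_hist T" .
  have "(\<Sum>q\<in>qis T. Qs q) \<subseteq># T"
    using sum_subseteq_mset_mono[of "qis T" Qs "qclass T"] sub by (simp add: sum_qclass)
  then show ?thesis
    using le by (simp add: image_mset_Diff image_mset_subseteq_mono subset_mset.le_diff_conv2)
qed

lemma le_opt:
  assumes "eligible l T"
    and "\<And>Qs. feasible l T Qs \<Longrightarrow> b \<le> size (T - (\<Sum>q\<in>qis T. Qs q))"
  shows "b \<le> opt l T"
proof -
  have "feasible l T (\<lambda>_. {#})"
    using assms(1) by (simp add: feasible_def eligible_def h_def)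
  then show ?thesis
    unfolding opt_def by (intro cInf_greatest) (auto intro: assms(2))
qed

theorem corollary2:
  fixes l :: nat and T R :: "('q \<times> 's) multiset"
  assumes "eligible l T"
    and "phase_one l T R"
  shows "l * h R \<le> opt l T"
proof (rule le_opt[OF assms(1)])
  fix Qs
  assume feasible: "feasible l T Qs"
  then have "eligible l (T - (\<Sum>q\<in>qis T. Qs q))"
    by (simp add: feasible_def)
  then show "l * h R \<le> size (T - (\<Sum>q\<in>qis T. Qs q))"
    using eligible_size_ge_h phase_one_removed_dominated[OF assms(2) feasible] by blast
qed

end
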